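(* Let the setting described in the context hold, and assume conditions (A)(i)–(iii) and (P), with $L_F^2\eta_k<1-\eta_F$ for every $k\ge1$. Let $k\ge1$ be such that the iterate satisfies $x_k^\delta\in\mathcal{B}_\rho(x^\dagger)$, and write $e_k^\delta=x_k^\delta-x^\dagger$. Define \[ c_k^\delta=2\eta_k\lambda_k^\delta\max(1,L_G^2)\big(\tfrac32+2\eta_k\lambda_k^\delta L_G^2\big), \qquad d_k=\frac{(1+\eta_F)^2}{2(1-L_F^2\eta_k-\eta_F)}\eta_k . \] Then \[ \|e_{k+1}^\delta\|^2\le(1+nc_k^\delta)\|e_k^\delta\|^2+nc_k^\delta(C_{max}+\delta)^2+nd_k\delta^2, \] and \begin{align*} \mathbb{E}[\|e_{k+1}^\delta\|^2]\le{}&(1+c_k^\delta)\mathbb{E}[\|e_k^\delta\|^2]+c_k^\delta(C_{max}+\delta)^2+2(1+\eta_F)\eta_k\delta\,\mathbb{E}[\|F(x_k^\delta)-y^\delta\|^2]^{1/2}\\ &-2(1-L_F^2\eta_k-\eta_F)\eta_k\,\mathbb{E}[\|F(x_k^\delta)-y^\delta\|^2]\\ \le{}&(1+c_k^\delta)\mathbb{E}[\|e_k^\delta\|^2]+c_k^\delta(C_{max}+\delta)^2+d_k\delta^2 . \end{align*}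
   Context: Setting. $X,Y$ are real Hilbert spaces and $n\ge1$. $Y^n$ is the product Hilbert space with $\|(z_i)\|^2=\sum_i\|z_i\|^2$. For $i=1,\dots,n$, $F_i:\mathcal{D}(F_i)\subset X\to Y$ and $G_i:X\to Y$ are nonlinear, $F(x)=n^{-1/2}(F_1(x),\dots,F_n(x))$ and $G(x)=n^{-1/2}(G_1(x),\dots,G_n(x))$. Data. $y^\dagger=n^{-1/2}(y_1^\dagger,\dots,y_n^\dagger)$ are the exact data and $y^\delta=n^{-1/2}(y_1^\delta,\dots,y_n^\delta)$ the noisy data, with $\|y^\delta-y^\dagger\|\le\delta$. Reference solution. $x_1$ is a deterministic initial guess, and $x^\dagger$ is the solution of $F(x)=y^\dagger$ of minimal distance to $x_1$. Algorithm. $x_1^\delta=x_1$, and \[ x_{k+1}^\delta=x_k^\delta-\eta_k\big(F_{i_k}'(x_k^\delta)^*(F_{i_k}(x_k^\delta)-y^\delta_{i_k})+\lambda_k^\delta G_{i_k}'(x_k^\delta)^*(G_{i_k}(x_k^\delta)-y^\delta_{i_k})\big), \] with $i_k$ drawn uniformly and independently from $\{1,\dots,n\}$, $\eta_k>0$ and $\lambda_k^\delta>0$. $\mathbb{E}$ is expectation over the random indices. (A) There is a closed ball $\mathcal{B}_\rho(x^\dagger)\subset\bigcap_i\mathcal{D}(F_i)$, $\rho\ge\|x_1-x^\dagger\|$ sufficiently large, on which the following hold. (i) $F_i$ and $G_i$ have continuous Fréchet derivatives with $\max_i\sup\|F_i'\|\le L_F$ and $\max_i\sup\|G_i'\|\le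 L_G$. (ii) There is $\eta_F\in[0,1)$ with $\|F_i(x)-F_i(\tilde x)-F_i'(\tilde x)(x-\tilde x)\|\le\eta_F\|F_i(x)-F_i(\tilde x)\|$ for all $i$ and $x,\tilde x\in\mathcal{B}_\rho(x^\dagger)$. (iii) $C_{min}\le\|G(x^* )-y^\dagger\|\le C_{max}$ for every solution $x^*\in\mathcal{B}_\rho(x^\dagger)$ of $F(x)=y^\dagger$, with constants $0<C_{min}\le C_{max}$. (P) $L_F^2\eta_k<1$, $\sum_k\eta_k=\infty$, and $\sum_k\eta_k\lambda_k^\delta<\infty$. *)

theory Defs
  imports "HOL-Analysis.Analysis" "HOL-Probability.Probability"
begin

text \<open>Norm in the scaled product space Y^n of the stacked vector
  n^(-1/2) (z_1,...,z_n): sqrt ((1/n) * sum_i norm (z_i)^2).\<close>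
definition stack_norm :: "nat \<Rightarrow> (nat \<Rightarrow> 'y::real_normed_vector) \<Rightarrow> real" where
  "stack_norm n z = sqrt ((1 / real n) * (\<Sum>i=1..n. (norm (z i))\<^sup>2))"

text \<open>Indices are 1-based: iterate k (k >= 1)
  is sgd_iter ... xi k, with sgd_iter ... xi 1 = x1 and
  x_{k+1} = x_k - eta_k (F_{i_k}'(x_k)^* (F_{i_k}(x_k) - y_{i_k})
                      + lambda_k G_{i_k}'(x_k)^* (G_{i_k}(x_k) - y_{i_k})),  i_k = xi k.
  The value at index 0 is a dummy (equal to x1).\<close>
fun sgd_iter ::
  "(nat \<Rightarrow> 'x::real_inner \<Rightarrow> 'y::real_inner) \<Rightarrow> (nat \<Rightarrow> 'x \<Rightarrow> ('x \<Rightarrow>\<^sub>L 'y)) \<Rightarrow>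
   (nat \<Rightarrow> 'x \<Rightarrow> 'y) \<Rightarrow> (nat \<Rightarrow> 'x \<Rightarrow> ('x \<Rightarrow>\<^sub>L 'y)) \<Rightarrow> (nat \<Rightarrow> 'y) \<Rightarrow>
   (nat \<Rightarrow> real) \<Rightarrow> (nat \<Rightarrow> real) \<Rightarrow> 'x \<Rightarrow> (nat \<Rightarrow> nat) \<Rightarrow> nat \<Rightarrow> 'x" where
  "sgd_iter F F' G G' y eta lam x1 xi 0 = x1"
| "sgd_iter F F' G G' y eta lam x1 xi (Suc k) =
     (if k = 0 then x1 else
      (let x = sgd_iter F F' G G' y eta lam x1 xi k; i = xi k in
       x - eta k *\<^sub>R (adjoint (blinfun_apply (F' i x)) (F i x - y i)
                     + lam k *\<^sub>R adjoint (blinfun_apply (G' i x)) (G i x - y i))))"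

definition index_law :: "nat \<Rightarrow> nat \<Rightarrow> (nat \<Rightarrow> nat) pmf" where
  "index_law n k = Pi_pmf {1..k} 1 (\<lambda>_. pmf_of_set {1..n})"

end

(*
  Write e = x_k - x^dagger, r_i = F_i(x_k) - y^delta_i and nu_i = y^delta_i - y^dagger_i, and let
  i = i_k.  Expanding the square, |e_{k+1}|^2 = |e|^2 - 2 eta <F_i'(x_k) e, r_i>
  - 2 eta lambda <G_i'(x_k) e, G_i(x_k) - y^delta_i> + eta^2 |...|^2.  The tangential cone
  condition bounds the first inner product below by (1 - eta_F) |r_i|^2 - (1 + eta_F) |nu_i| |r_i|,
  and the penalty terms are absorbed into c_k (|e|^2 + a_i^2) via the Lipschitz bound
  |G_i(x_k) - G_i(x^dagger)| <= L_G |e|, where a_i = |G_i(x^dagger) - y^dagger_i| + |nu_i|.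

  Pathwise, a single component of a stacked vector satisfies |z_i|^2 <= n |z|^2.  In expectation,
  i_k is uniform and independent of x_k, so averaging over i turns a_i, nu_i and r_i into stacked
  norms, bounded by C_max + delta, delta and |F(x_k) - y^delta|.  Jensen's inequality, followed by
  maximising 2 (1 + eta_F) eta delta t - 2 (1 - L_F^2 eta - eta_F) eta t^2 over t, yields d_k.

  The adjoint identity <A x, y> = <x, A^* y> for bounded operators on a real Hilbert space rests on
  the Riesz representation theorem, which follows from the existence of a maximizer of the
  functional on the unit ball: near-maximizers form a Cauchy sequence by the parallelogram law.
*)

theory Submission
  imports Defs
begin

section \<open>Riesz representation in real Hilbert spaces\<close>

lemma Cauchy_of_dist_le_add:
  fixes u :: "nat \<Rightarrow> 'a::metric_space"
  assumes dist_le: "\<And>i j. dist (u i) (u j) \<le> b i + b j" and b: "b \<longlonglongrightarrow> 0"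
  shows "Cauchy u"
proof (rule metric_CauchyI)
  fix e :: real assume "e > 0"
  then obtain N where "\<forall>j\<ge>N. b j < e / 2"
    using order_tendstoD(2)[OF b, of "e / 2"] by (auto simp: eventually_sequentially)
  then show "\<exists>M. \<forall>i\<ge>M. \<forall>j\<ge>M. dist (u i) (u j) < e"
    using dist_le by (smt (verit, best) field_sum_of_halves)
qed

lemma linear_coeff_eq_0_if_quadratic_nonneg:
  fixes a b :: real
  assumes "\<And>t. 0 \<le> 2 * t * a + t\<^sup>2 * b"
  shows "a = 0"
proof (rule ccontr)
  assume "a \<noteq> 0"
  define s where "s = \<bar>b\<bar> + 1"
  have "s > 0" "b < 2 * s" by (auto simp: s_def)
  have "2 * (- a / s) * a + (- a / s)\<^sup>2 * b = a\<^sup>2 * (b - 2 * s) / s\<^sup>2"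
    using \<open>s > 0\<close> by (simp add: field_simps power2_eq_square)
  also have "\<dots> < 0" using \<open>a \<noteq> 0\<close> \<open>s > 0\<close> \<open>b < 2 * s\<close> by (intro divide_neg_pos mult_pos_neg) auto
  finally show False using assms[of "- a / s"] by linarith
qed

lemma bounded_linear_functional_sup_unit_ball:
  fixes \<phi> :: "'a::real_normed_vector \<Rightarrow> real"
  assumes "bounded_linear \<phi>"
  obtains m where "0 \<le> m" "\<And>v. \<phi> v \<le> m * norm v"
    "\<And>e. 0 < e \<Longrightarrow> \<exists>u. norm u \<le> 1 \<and> m - e < \<phi> u"
proof -
  interpret bounded_linear \<phi> by fact
  obtain K where K: "\<And>x. norm (\<phi> x) \<le> norm x * K" "K > 0" using pos_bounded by blast
  define m where "m = Sup (\<phi> ` cball 0 1)"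
  have "\<phi> x \<le> K" if "norm x \<le> 1" for x
    using K(1)[of x, unfolded real_norm_def] mult_right_mono[OF that, of K] K(2) abs_ge_self[of "\<phi> x"]
    by linarith
  then have bdd: "bdd_above (\<phi> ` cball 0 1)" by (intro bdd_aboveI[of _ K]) auto
  then have le_m: "\<phi> u \<le> m" if "norm u \<le> 1" for u
    unfolding m_def using that by (intro cSup_upper) auto
  show ?thesis
  proof
    show "0 \<le> m" using le_m[of 0] by (simp add: zero)
    show "\<phi> v \<le> m * norm v" for v
    proof (cases "v = 0")
      case False
      then have "\<phi> (v /\<^sub>R norm v) \<le> m" by (intro le_m) simp
      then show ?thesis using False by (simp add: scale field_simps)
    qed (simp add: zero le_m)
    show "\<exists>u. norm u \<le> 1 \<and> m - e < \<phi> u" if "0 < e" for e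
      using less_cSup_iff[OF _ bdd, of "m - e"] that by (auto simp: m_def)
  qed
qed

lemma norm_diff_near_maximizers_le:
  fixes \<phi> :: "'a::real_inner \<Rightarrow> real"
  assumes "linear \<phi>" "0 < m" and le_m: "\<And>v. \<phi> v \<le> m * norm v"
    and "norm u \<le> 1" "norm u' \<le> 1"
  shows "norm (u - u') \<le> 2 * sqrt ((m - \<phi> u) / m) + 2 * sqrt ((m - \<phi> u') / m)"
proof -
  define s where "s = (m - \<phi> u) + (m - \<phi> u')"
  have "\<phi> v \<le> m" if "norm v \<le> 1" for v
    using le_m[of v] mult_left_le[OF that, of m] \<open>0 < m\<close> by linarith
  then have "\<phi> u \<le> m" "\<phi> u' \<le> m" using assms(4,5) by blast+
  have "2 * m - s \<le> m * norm (u + u')"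
    using le_m[of "u + u'"] linear_add[OF assms(1)] by (simp add: s_def)
  have "(norm (u - u'))\<^sup>2 = 2 * (norm u)\<^sup>2 + 2 * (norm u')\<^sup>2 - (norm (u + u'))\<^sup>2"
    by (simp add: power2_norm_eq_inner inner_diff_left inner_diff_right inner_add_left
        inner_add_right inner_commute)
  moreover have "(norm u)\<^sup>2 \<le> 1" "(norm u')\<^sup>2 \<le> 1"
    using assms(4,5) by (simp_all add: power_le_one)
  ultimately have "(norm (u - u'))\<^sup>2 \<le> 4 - (norm (u + u'))\<^sup>2" by linarith
  then have "m\<^sup>2 * (norm (u - u'))\<^sup>2 \<le> 4 * m\<^sup>2 - (m * norm (u + u'))\<^sup>2"
    using mult_left_mono[of _ _ "m\<^sup>2"] by (force simp: power_mult_distrib algebra_simps)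
  moreover have "4 * m\<^sup>2 - (m * norm (u + u'))\<^sup>2 \<le> 4 * m * s"
  proof (cases "s \<le> 2 * m")
    case True
    then have "(2 * m - s)\<^sup>2 \<le> (m * norm (u + u'))\<^sup>2"
      using \<open>2 * m - s \<le> _\<close> by (intro power_mono) auto
    moreover have "(2 * m - s)\<^sup>2 = 4 * m\<^sup>2 - 4 * m * s + s\<^sup>2"
      by (simp add: power2_eq_square algebra_simps)
    ultimately show ?thesis using zero_le_power2[of s] by linarith
  next
    case False
    then have "4 * m\<^sup>2 \<le> 4 * m * s" using \<open>0 < m\<close> by (simp add: power2_eq_square)
    then show ?thesis using zero_le_power2[of "m * norm (u + u')"] by linarith
  qed
  ultimately have "m * (m * (norm (u - u'))\<^sup>2) \<le> m * (4 * s)"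
    by (simp add: power2_eq_square algebra_simps)
  then have "(norm (u - u'))\<^sup>2 \<le> 4 * ((m - \<phi> u) / m + (m - \<phi> u') / m)"
    using \<open>0 < m\<close> by (simp add: s_def field_simps)
  then have "norm (u - u') \<le> 2 * sqrt ((m - \<phi> u) / m + (m - \<phi> u') / m)"
    by (metis real_le_rsqrt real_sqrt_four real_sqrt_mult norm_ge_zero)
  also have "\<dots> \<le> 2 * sqrt ((m - \<phi> u) / m) + 2 * sqrt ((m - \<phi> u') / m)"
    using sqrt_add_le_add_sqrt[of "(m - \<phi> u) / m" "(m - \<phi> u') / m"] \<open>0 < m\<close>
      \<open>\<phi> u \<le> m\<close> \<open>\<phi> u' \<le> m\<close> by simp
  finally show ?thesis .
qed

lemma bounded_linear_functional_maximizer: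
  fixes \<phi> :: "'a::{real_inner,complete_space} \<Rightarrow> real"
  assumes "bounded_linear \<phi>"
  obtains w where "norm w \<le> 1" "\<And>v. \<phi> v \<le> \<phi> w * norm v"
proof -
  interpret bounded_linear \<phi> by fact
  obtain m where "0 \<le> m" and le_m: "\<And>v. \<phi> v \<le> m * norm v"
    and near_m: "\<And>e. 0 < e \<Longrightarrow> \<exists>u. norm u \<le> 1 \<and> m - e < \<phi> u"
    using bounded_linear_functional_sup_unit_ball[OF assms] by blast
  consider "m = 0" | "0 < m" using \<open>0 \<le> m\<close> by linarith
  then show ?thesis
  proof cases
    case 1
    then show ?thesis using le_m by (intro that[of 0]) (auto simp: zero)
  next
    case 2
    obtain u where u_le_1: "\<And>j. norm (u j) \<le> 1"
      and u_max: "\<And>j. m - inverse (real (Suc j)) < \<phi> (u j)"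
      using near_m[of "inverse (real (Suc _))"]
      by (metis inverse_positive_iff_positive of_nat_0_less_iff zero_less_Suc)
    define a where "a j = (m - \<phi> (u j)) / m" for j
    have "0 \<le> m - \<phi> (u j)" "m - \<phi> (u j) \<le> inverse (real (Suc j))" for j
      using le_m[of "u j"] mult_left_le[OF u_le_1 \<open>0 \<le> m\<close>, of j] u_max[of j] by linarith+
    then have gap: "(\<lambda>j. m - \<phi> (u j)) \<longlonglongrightarrow> 0"
      by (intro real_tendsto_sandwich[OF always_eventually always_eventually tendsto_const
            LIMSEQ_inverse_real_of_nat]) blast+
    have "(\<lambda>j. \<phi> (u j)) \<longlonglongrightarrow> m"
      using tendsto_diff[OF tendsto_const[of m] gap] by simp
    have "(\<lambda>j. 2 * sqrt (a j)) \<longlonglongrightarrow> 0"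
      using tendsto_mult[OF tendsto_const tendsto_real_sqrt[OF tendsto_divide_zero[OF gap]], of 2 m]
      by (simp add: a_def)
    have "Cauchy u"
      using norm_diff_near_maximizers_le[OF linear 2 le_m u_le_1 u_le_1] \<open>(\<lambda>j. 2 * sqrt (a j)) \<longlonglongrightarrow> 0\<close>
      by (intro Cauchy_of_dist_le_add[where b = "\<lambda>j. 2 * sqrt (a j)"]) (simp_all add: dist_norm a_def)
    then obtain w where "u \<longlonglongrightarrow> w" using Cauchy_convergent_iff convergent_def by blast
    have "norm w \<le> 1"
      using tendsto_norm[OF \<open>u \<longlonglongrightarrow> w\<close>] u_le_1 by (intro LIMSEQ_le_const2) auto
    have "\<phi> w = m"
      using tendsto[OF \<open>u \<longlonglongrightarrow> w\<close>] \<open>(\<lambda>j. \<phi> (u j)) \<longlonglongrightarrow> m\<close> LIMSEQ_unique by blast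
    then show ?thesis using \<open>norm w \<le> 1\<close> le_m by (intro that) auto
  qed
qed

lemma maximizer_orthogonal_kernel:
  fixes \<phi> :: "'a::real_inner \<Rightarrow> real"
  assumes "linear \<phi>" "norm w = 1" "0 < \<phi> w" and max: "\<And>v. \<phi> v \<le> \<phi> w * norm v"
    and "\<phi> v = 0"
  shows "w \<bullet> v = 0"
proof (rule linear_coeff_eq_0_if_quadratic_nonneg)
  fix t :: real
  have "\<phi> w \<le> \<phi> w * norm (w + t *\<^sub>R v)"
    using max[of "w + t *\<^sub>R v"] \<open>\<phi> v = 0\<close> linear_add[OF assms(1)] linear_scale[OF assms(1)] by simp
  then have "1 \<le> (norm (w + t *\<^sub>R v))\<^sup>2"
    using \<open>0 < \<phi> w\<close> by (simp add: one_le_power)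
  moreover have "(norm (w + t *\<^sub>R v))\<^sup>2 = 1 + 2 * t * (w \<bullet> v) + t\<^sup>2 * (v \<bullet> v)"
    using \<open>norm w = 1\<close> unfolding power2_norm_eq_inner
    by (simp add: inner_add_left inner_add_right inner_commute norm_eq_1 power2_eq_square)
  ultimately show "0 \<le> 2 * t * (w \<bullet> v) + t\<^sup>2 * (v \<bullet> v)" by linarith
qed

lemma bounded_linear_functional_riesz:
  fixes \<phi> :: "'a::{real_inner,complete_space} \<Rightarrow> real"
  assumes "bounded_linear \<phi>"
  obtains z where "\<And>v. \<phi> v = v \<bullet> z"
proof -
  interpret bounded_linear \<phi> by fact
  obtain w where "norm w \<le> 1" and max: "\<And>v. \<phi> v \<le> \<phi> w * norm v"
    using bounded_linear_functional_maximizer[OF assms] by blast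
  define m where "m = \<phi> w"
  have abs_le: "\<bar>\<phi> v\<bar> \<le> m * norm v" for v
    using max[of v] max[of "- v"] by (simp add: m_def neg)
  consider "m \<le> 0" | "m > 0" by linarith
  then show ?thesis
  proof cases
    case 1
    then have "\<phi> v = v \<bullet> 0" for v
      using abs_le[of v] mult_nonpos_nonneg[OF 1 norm_ge_zero, of v] by simp
    then show ?thesis by (rule that)
  next
    case 2
    have "norm w = 1"
      using max[of w] 2 \<open>norm w \<le> 1\<close> by (simp add: m_def[symmetric])
    have "\<phi> v = v \<bullet> (m *\<^sub>R w)" for v
    proof -
      have "\<phi> (v - (\<phi> v / m) *\<^sub>R w) = 0"
        using 2 by (simp add: diff scale m_def)
      then have "w \<bullet> (v - (\<phi> v / m) *\<^sub>R w) = 0"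
        using maximizer_orthogonal_kernel[OF linear \<open>norm w = 1\<close> _ max] 2 by (simp add: m_def)
      then have "w \<bullet> v = \<phi> v / m"
        using \<open>norm w = 1\<close> by (simp add: inner_diff_right norm_eq_1)
      then show ?thesis using 2 by (simp add: inner_commute)
    qed
    then show ?thesis by (rule that)
  qed
qed

lemma adjoint_works_hilbert:
  fixes A :: "'a::{real_inner,complete_space} \<Rightarrow> 'b::real_inner"
  assumes "bounded_linear A"
  shows "A x \<bullet> y = x \<bullet> adjoint A y"
proof -
  have "\<forall>y. \<exists>z. \<forall>x. A x \<bullet> y = x \<bullet> z"
  proof
    fix y
    have "bounded_linear (\<lambda>x. A x \<bullet> y)"
      using bounded_linear_compose[OF bounded_linear_inner_left assms] by simp
    then obtain z where "\<And>x. A x \<bullet> y = x \<bullet> z" by (rule bounded_linear_functional_riesz) blast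
    then show "\<exists>z. \<forall>x. A x \<bullet> y = x \<bullet> z" by blast
  qed
  then show ?thesis
    unfolding adjoint_def choice_iff by (intro someI2_ex[where Q = "\<lambda>f'. A x \<bullet> y = x \<bullet> f' y"]) auto
qed

lemma norm_adjoint_blinfun_le:
  fixes T :: "'a::{real_inner,complete_space} \<Rightarrow>\<^sub>L 'b::real_inner"
  shows "norm (adjoint (blinfun_apply T) y) \<le> norm T * norm y"
proof -
  define z where "z = adjoint (blinfun_apply T) y"
  have "(norm z)\<^sup>2 = T z \<bullet> y"
    using adjoint_works_hilbert[OF blinfun.bounded_linear_right, of T z y]
    by (simp add: z_def power2_norm_eq_inner)
  also have "\<dots> \<le> norm T * norm z * norm y"
    by (rule order_trans[OF norm_cauchy_schwarz mult_right_mono[OF norm_blinfun]]) simp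
  finally have "norm z * norm z \<le> (norm T * norm y) * norm z"
    by (simp add: power2_eq_square algebra_simps)
  then show ?thesis
    by (cases "z = 0") (simp_all add: z_def[symmetric])
qed

section \<open>A descent step with two adjoint gradients\<close>

definition penalty_factor :: "real \<Rightarrow> real \<Rightarrow> real" where
  "penalty_factor \<kappa> L = 2 * \<kappa> * max 1 (L\<^sup>2) * (3/2 + 2 * \<kappa> * L\<^sup>2)"

lemma penalty_factor_nonneg: "0 \<le> \<kappa> \<Longrightarrow> 0 \<le> penalty_factor \<kappa> L"
  by (simp add: penalty_factor_def)

lemma penalty_terms_le:
  fixes \<kappa> L E S a :: real
  assumes "0 \<le> \<kappa>" "0 \<le> L" "0 \<le> E" "0 \<le> S" and S_le: "S \<le> L * E + a"
  shows "2 * \<kappa> * L * E * S + 2 * \<kappa>\<^sup>2 * L\<^sup>2 * S\<^sup>2 \<le> penalty_factor \<kappa> L * (E\<^sup>2 + a\<^sup>2)"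
proof -
  define P where "P = L * E"
  have "0 \<le> P" using assms by (simp add: P_def)
  have "P * S \<le> P * (P + a)" using S_le \<open>0 \<le> P\<close> by (simp add: P_def mult_left_mono)
  also have "\<dots> \<le> 3/2 * P\<^sup>2 + 1/2 * a\<^sup>2"
    using zero_le_power2[of "P - a"] by (simp add: power2_eq_square algebra_simps)
  finally have PS: "P * S \<le> 3/2 * P\<^sup>2 + 1/2 * a\<^sup>2" .
  have "S\<^sup>2 \<le> (P + a)\<^sup>2" using S_le \<open>0 \<le> S\<close> by (simp add: P_def power_mono)
  also have "\<dots> \<le> 2 * P\<^sup>2 + 2 * a\<^sup>2"
    using zero_le_power2[of "P - a"] by (simp add: power2_eq_square algebra_simps)
  finally have SS: "S\<^sup>2 \<le> 2 * P\<^sup>2 + 2 * a\<^sup>2" .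
  have "2 * \<kappa> * L * E * S + 2 * \<kappa>\<^sup>2 * L\<^sup>2 * S\<^sup>2
      \<le> 2 * \<kappa> * (3/2 * P\<^sup>2 + 1/2 * a\<^sup>2) + 2 * \<kappa>\<^sup>2 * L\<^sup>2 * (2 * P\<^sup>2 + 2 * a\<^sup>2)"
    using mult_left_mono[OF PS, of "2 * \<kappa>"] mult_left_mono[OF SS, of "2 * \<kappa>\<^sup>2 * L\<^sup>2"] assms(1)
    by (simp add: P_def algebra_simps)
  also have "\<dots> \<le> (3 * \<kappa> + 4 * \<kappa>\<^sup>2 * L\<^sup>2) * (P\<^sup>2 + a\<^sup>2)"
    using assms(1) by (simp add: algebra_simps)
  also have "\<dots> \<le> (3 * \<kappa> + 4 * \<kappa>\<^sup>2 * L\<^sup>2) * (max 1 (L\<^sup>2) * (E\<^sup>2 + a\<^sup>2))"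
  proof (rule mult_left_mono)
    show "P\<^sup>2 + a\<^sup>2 \<le> max 1 (L\<^sup>2) * (E\<^sup>2 + a\<^sup>2)"
      using mult_right_mono[of "L\<^sup>2" "max 1 (L\<^sup>2)" "E\<^sup>2"] mult_right_mono[of 1 "max 1 (L\<^sup>2)" "a\<^sup>2"]
      by (simp add: P_def power_mult_distrib distrib_left)
  qed (use assms(1) in simp)
  also have "\<dots> = penalty_factor \<kappa> L * (E\<^sup>2 + a\<^sup>2)"
    by (simp add: penalty_factor_def power2_eq_square algebra_simps)
  finally show ?thesis .
qed

lemma linear_minus_quadratic_le:
  fixes a b t :: real
  assumes "0 < a"
  shows "b * t - a * t\<^sup>2 \<le> b\<^sup>2 / (4 * a)"
proof -
  have "4 * a * (b * t - a * t\<^sup>2) \<le> b\<^sup>2"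
    using zero_le_power2[of "2 * a * t - b"] by (simp add: power2_eq_square algebra_simps)
  then show ?thesis using assms by (simp add: field_simps)
qed

lemma tangential_cone_inner_ge:
  fixes r \<nu> y :: "'a::real_inner"
  assumes cone: "norm (r + \<nu> - y) \<le> \<eta>_F * norm (r + \<nu>)" and "0 \<le> \<eta>_F"
  shows "(1 - \<eta>_F) * (norm r)\<^sup>2 - (1 + \<eta>_F) * norm \<nu> * norm r \<le> y \<bullet> r"
proof -
  have "y \<bullet> r = (norm r)\<^sup>2 + \<nu> \<bullet> r - (r + \<nu> - y) \<bullet> r"
    by (simp add: inner_diff_left inner_add_left power2_norm_eq_inner)
  moreover have "\<nu> \<bullet> r \<ge> - (norm \<nu> * norm r)"
    using Cauchy_Schwarz_ineq2[of \<nu> r] by linarith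
  moreover have "(r + \<nu> - y) \<bullet> r \<le> \<eta>_F * (norm r + norm \<nu>) * norm r"
  proof -
    have "(r + \<nu> - y) \<bullet> r \<le> norm (r + \<nu> - y) * norm r" by (rule norm_cauchy_schwarz)
    also have "\<dots> \<le> \<eta>_F * norm (r + \<nu>) * norm r" using cone by (rule mult_right_mono) simp
    also have "\<dots> \<le> \<eta>_F * (norm r + norm \<nu>) * norm r"
      using \<open>0 \<le> \<eta>_F\<close> norm_triangle_ineq[of r \<nu>] by (intro mult_right_mono mult_left_mono) auto
    finally show ?thesis .
  qed
  ultimately show ?thesis by (simp add: algebra_simps power2_eq_square)
qed

lemma power2_norm_add_le: "(norm (u + v))\<^sup>2 \<le> 2 * (norm u)\<^sup>2 + 2 * (norm v)\<^sup>2"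
proof -
  have "(norm (u + v))\<^sup>2 \<le> (norm u + norm v)\<^sup>2" by (simp add: norm_triangle_ineq power_mono)
  also have "\<dots> \<le> 2 * (norm u)\<^sup>2 + 2 * (norm v)\<^sup>2"
    using zero_le_power2[of "norm u - norm v"] by (simp add: power2_eq_square algebra_simps)
  finally show ?thesis .
qed

lemma power2_norm_diff: "(norm (x - y))\<^sup>2 = (norm x)\<^sup>2 - 2 * (x \<bullet> y) + (norm y)\<^sup>2"
  by (simp add: power2_norm_eq_inner inner_diff_left inner_diff_right inner_commute)

lemma power2_norm_adjoint_step:
  fixes A B :: "'x::{real_inner,complete_space} \<Rightarrow>\<^sub>L 'y::real_inner"
    and e :: 'x and r s :: 'y and \<eta> lam :: real
  defines "w \<equiv> adjoint (blinfun_apply A) r + lam *\<^sub>R adjoint (blinfun_apply B) s"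
  shows "(norm (e - \<eta> *\<^sub>R w))\<^sup>2
    = (norm e)\<^sup>2 - 2 * (\<eta> * (A e \<bullet> r) + (\<eta> * lam) * (B e \<bullet> s)) + \<eta>\<^sup>2 * (norm w)\<^sup>2"
proof -
  have "(norm (\<eta> *\<^sub>R w))\<^sup>2 = \<eta>\<^sup>2 * (norm w)\<^sup>2" by (simp add: power_mult_distrib)
  moreover have "e \<bullet> (\<eta> *\<^sub>R w) = \<eta> * (A e \<bullet> r) + (\<eta> * lam) * (B e \<bullet> s)"
    using adjoint_works_hilbert[OF blinfun.bounded_linear_right, of A e r]
      adjoint_works_hilbert[OF blinfun.bounded_linear_right, of B e s]
    by (simp add: w_def inner_add_right algebra_simps)
  ultimately show ?thesis using power2_norm_diff[of e "\<eta> *\<^sub>R w"] by simp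
qed

lemma power2_norm_adjoint_sum_le:
  fixes A B :: "'x::{real_inner,complete_space} \<Rightarrow>\<^sub>L 'y::real_inner"
  assumes "norm A \<le> L_F" "norm B \<le> L_G"
  shows "(norm (adjoint (blinfun_apply A) r + lam *\<^sub>R adjoint (blinfun_apply B) s))\<^sup>2
    \<le> 2 * (L_F\<^sup>2 * (norm r)\<^sup>2) + 2 * (lam\<^sup>2 * (L_G\<^sup>2 * (norm s)\<^sup>2))"
proof -
  define u v where "u = adjoint (blinfun_apply A) r" and "v = adjoint (blinfun_apply B) s"
  have "norm u \<le> L_F * norm r" "norm v \<le> L_G * norm s"
    unfolding u_def v_def
    by (rule order_trans[OF norm_adjoint_blinfun_le mult_right_mono], use assms in simp_all)+
  then have "(norm u)\<^sup>2 \<le> L_F\<^sup>2 * (norm r)\<^sup>2" "(norm v)\<^sup>2 \<le> L_G\<^sup>2 * (norm s)\<^sup>2"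
    by (auto simp: power_mult_distrib[symmetric] intro!: power_mono)
  moreover have "(norm (lam *\<^sub>R v))\<^sup>2 = lam\<^sup>2 * (norm v)\<^sup>2" by (simp add: power_mult_distrib)
  ultimately have "(norm (lam *\<^sub>R v))\<^sup>2 \<le> lam\<^sup>2 * (L_G\<^sup>2 * (norm s)\<^sup>2)"
    by (simp add: mult_left_mono)
  then show ?thesis
    using power2_norm_add_le[of u "lam *\<^sub>R v"] \<open>(norm u)\<^sup>2 \<le> _\<close> by (simp add: u_def v_def)
qed

lemma norm_descent_step_sq_le:
  fixes A B :: "'x::{real_inner,complete_space} \<Rightarrow>\<^sub>L 'y::real_inner"
    and e :: 'x and r s \<nu> :: 'y
  assumes "norm A \<le> L_F" "norm B \<le> L_G" "0 \<le> \<eta>" "0 \<le> lam" "0 \<le> \<eta>_F"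
    and cone: "norm (r + \<nu> - A e) \<le> \<eta>_F * norm (r + \<nu>)"
    and s_le: "norm s \<le> L_G * norm e + a"
  shows "(norm (e - \<eta> *\<^sub>R (adjoint (blinfun_apply A) r + lam *\<^sub>R adjoint (blinfun_apply B) s)))\<^sup>2
    \<le> (1 + penalty_factor (\<eta> * lam) L_G) * (norm e)\<^sup>2 + penalty_factor (\<eta> * lam) L_G * a\<^sup>2
      - 2 * (1 - L_F\<^sup>2 * \<eta> - \<eta>_F) * \<eta> * (norm r)\<^sup>2 + 2 * (1 + \<eta>_F) * \<eta> * norm \<nu> * norm r"
proof -
  define w where "w = adjoint (blinfun_apply A) r + lam *\<^sub>R adjoint (blinfun_apply B) s"
  have "0 \<le> L_G" using assms(2) norm_ge_zero order_trans by blast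
  have "\<eta> * ((1 - \<eta>_F) * (norm r)\<^sup>2 - (1 + \<eta>_F) * norm \<nu> * norm r) \<le> \<eta> * (A e \<bullet> r)"
    using tangential_cone_inner_ge[OF cone \<open>0 \<le> \<eta>_F\<close>] \<open>0 \<le> \<eta>\<close> by (rule mult_left_mono)
  moreover have "- (B e \<bullet> s) \<le> L_G * norm e * norm s"
    using Cauchy_Schwarz_ineq2[of "B e" s] norm_blinfun[of B e] mult_right_mono[OF assms(2), of "norm e"]
      mult_right_mono[of "norm (B e)" "L_G * norm e" "norm s"] by fastforce
  then have "- ((\<eta> * lam) * (B e \<bullet> s)) \<le> (\<eta> * lam) * (L_G * norm e * norm s)"
    using mult_left_mono[of _ _ "\<eta> * lam"] \<open>0 \<le> \<eta>\<close> \<open>0 \<le> lam\<close> by fastforce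
  moreover have "\<eta>\<^sup>2 * (norm w)\<^sup>2 \<le> \<eta>\<^sup>2 * (2 * (L_F\<^sup>2 * (norm r)\<^sup>2) + 2 * (lam\<^sup>2 * (L_G\<^sup>2 * (norm s)\<^sup>2)))"
    unfolding w_def using power2_norm_adjoint_sum_le[OF assms(1,2)] by (rule mult_left_mono) simp
  ultimately have "(norm (e - \<eta> *\<^sub>R w))\<^sup>2
      \<le> (norm e)\<^sup>2 - 2 * (\<eta> * ((1 - \<eta>_F) * (norm r)\<^sup>2 - (1 + \<eta>_F) * norm \<nu> * norm r))
        + 2 * ((\<eta> * lam) * (L_G * norm e * norm s))
        + \<eta>\<^sup>2 * (2 * (L_F\<^sup>2 * (norm r)\<^sup>2) + 2 * (lam\<^sup>2 * (L_G\<^sup>2 * (norm s)\<^sup>2)))"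
    unfolding w_def power2_norm_adjoint_step by (smt (verit))
  also have "\<dots> = (norm e)\<^sup>2 - 2 * (1 - L_F\<^sup>2 * \<eta> - \<eta>_F) * \<eta> * (norm r)\<^sup>2
      + 2 * (1 + \<eta>_F) * \<eta> * norm \<nu> * norm r
      + (2 * (\<eta> * lam) * L_G * norm e * norm s + 2 * (\<eta> * lam)\<^sup>2 * L_G\<^sup>2 * (norm s)\<^sup>2)"
    by (simp add: power2_eq_square algebra_simps)
  also have "\<dots> \<le> (norm e)\<^sup>2 - 2 * (1 - L_F\<^sup>2 * \<eta> - \<eta>_F) * \<eta> * (norm r)\<^sup>2
      + 2 * (1 + \<eta>_F) * \<eta> * norm \<nu> * norm r + penalty_factor (\<eta> * lam) L_G * ((norm e)\<^sup>2 + a\<^sup>2)"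
    using penalty_terms_le[of "\<eta> * lam" L_G "norm e" "norm s" a] assms(3,4) \<open>0 \<le> L_G\<close> s_le by simp
  finally show ?thesis by (simp add: w_def algebra_simps)
qed

section \<open>Stacked norms and the uniform random index\<close>

lemma stack_norm_nonneg: "0 \<le> stack_norm n z"
  by (simp add: stack_norm_def sum_nonneg)

lemma power2_stack_norm: "(stack_norm n z)\<^sup>2 = (\<Sum>i=1..n. (norm (z i))\<^sup>2) / n"
  by (simp add: stack_norm_def sum_nonneg)

lemma power2_norm_le_stack_norm:
  assumes "i \<in> {1..n}"
  shows "(norm (z i))\<^sup>2 \<le> n * (stack_norm n z)\<^sup>2"
  using member_le_sum[of i "{1..n}" "\<lambda>i. (norm (z i))\<^sup>2"] assms by (simp add: power2_stack_norm)

lemma stack_norm_eq_L2_set: "stack_norm n z = L2_set (\<lambda>i. norm (z i)) {1..n} / sqrt n"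
  by (simp add: stack_norm_def L2_set_def real_sqrt_divide)

lemma stack_norm_add_norm_le:
  "stack_norm n (\<lambda>i. norm (u i) + norm (v i)) \<le> stack_norm n u + stack_norm n v"
proof -
  have "L2_set (\<lambda>i. norm (norm (u i) + norm (v i))) {1..n}
      \<le> L2_set (\<lambda>i. norm (u i)) {1..n} + L2_set (\<lambda>i. norm (v i)) {1..n}"
    using L2_set_triangle_ineq[of "\<lambda>i. norm (u i)" "\<lambda>i. norm (v i)" "{1..n}"] by simp
  then show ?thesis
    unfolding stack_norm_eq_L2_set by (simp add: divide_right_mono add_divide_distrib[symmetric])
qed

lemma mean_norm_mult_le:
  "(\<Sum>i=1..n. norm (u i) * norm (v i)) / n \<le> stack_norm n u * stack_norm n v"
proof -
  have "(\<Sum>i=1..n. norm (u i) * norm (v i))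
      \<le> L2_set (\<lambda>i. norm (u i)) {1..n} * L2_set (\<lambda>i. norm (v i)) {1..n}"
    using L2_set_mult_ineq[of "\<lambda>i. norm (u i)" "\<lambda>i. norm (v i)" "{1..n}"] by simp
  then show ?thesis
    unfolding stack_norm_eq_L2_set by (simp add: divide_right_mono)
qed

lemma finite_set_pmf_index_law: "1 \<le> n \<Longrightarrow> finite (set_pmf (index_law n k))"
  unfolding index_law_def by (subst set_Pi_pmf) (auto intro!: finite_PiE_dflt)

lemma expectation_index_law_fresh_index:
  fixes g :: "(nat \<Rightarrow> nat) \<Rightarrow> nat \<Rightarrow> real"
  assumes "1 \<le> k" "1 \<le> n" and fresh: "\<And>\<xi> i y. g (\<xi>(k := y)) i = g \<xi> i"
  shows "measure_pmf.expectation (index_law n k) (\<lambda>\<xi>. g \<xi> (\<xi> k))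
       = measure_pmf.expectation (index_law n k) (\<lambda>\<xi>. (\<Sum>i=1..n. g \<xi> i) / n)"
proof -
  define P where "P = Pi_pmf {1..<k} 1 (\<lambda>_. pmf_of_set {1..n::nat})"
  have "finite (set_pmf P)"
    using \<open>1 \<le> n\<close> unfolding P_def by (subst set_Pi_pmf) (auto intro!: finite_PiE_dflt)
  then have integrable: "integrable P f" for f :: "(nat \<Rightarrow> nat) \<Rightarrow> real"
    by (rule integrable_measure_pmf_finite)
  have "{1..k} = insert k {1..<k}" using \<open>1 \<le> k\<close> by auto
  then have law: "index_law n k = pmf_of_set {1..n} \<bind> (\<lambda>y. map_pmf (\<lambda>f. f(k := y)) P)"
    unfolding index_law_def P_def by (simp add: Pi_pmf_insert' map_pmf_def)
  have split: "measure_pmf.expectation (index_law n k) h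
      = (\<Sum>y=1..n. measure_pmf.expectation P (\<lambda>f. h (f(k := y)))) / n" for h
    unfolding law using \<open>1 \<le> n\<close> \<open>finite (set_pmf P)\<close>
    by (subst pmf_expectation_bind_pmf_of_set) (auto simp: sum_distrib_left divide_inverse_commute)
  show ?thesis
    unfolding split using \<open>1 \<le> n\<close>
    by (simp add: fresh integrable Bochner_Integration.integral_sum sum_divide_distrib)
qed

lemma (in prob_space) expectation_le_sqrt_expectation_power2:
  fixes f :: "'a \<Rightarrow> real"
  assumes "integrable M f" "integrable M (\<lambda>x. (f x)\<^sup>2)"
  shows "expectation f \<le> sqrt (expectation (\<lambda>x. (f x)\<^sup>2))"
proof -
  have "(expectation f)\<^sup>2 \<le> expectation (\<lambda>x. (f x)\<^sup>2)"
    using variance_eq[OF assms] variance_positive[of f] by linarith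
  then show ?thesis by (rule real_le_rsqrt)
qed

section \<open>One step of the stochastic iteration\<close>

(* Step k with eta = eta_k and lam = lambda_k^delta fixed; c and d are the constants c_k^delta and
   d_k of the statement.  B stands for the ball B_rho(x^dagger), of which only convexity is used. *)
locale sgd_step =
  fixes F G :: "nat \<Rightarrow> 'x::{real_inner,complete_space} \<Rightarrow> 'y::real_inner"
    and F' G' :: "nat \<Rightarrow> 'x \<Rightarrow> ('x \<Rightarrow>\<^sub>L 'y)"
    and ydag ydel :: "nat \<Rightarrow> 'y"
    and xdag :: 'x and B :: "'x set" and n :: nat
    and \<delta> L_F L_G \<eta>_F C_max \<eta> lam :: real
  assumes n_pos: "1 \<le> n"
    and noise: "stack_norm n (\<lambda>i. ydel i - ydag i) \<le> \<delta>"
    and convex_B: "convex B" and xdag_in_B: "xdag \<in> B"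
    and xdag_sol: "\<And>i. i \<in> {1..n} \<Longrightarrow> F i xdag = ydag i"
    and G_deriv: "\<And>i z. i \<in> {1..n} \<Longrightarrow> z \<in> B \<Longrightarrow>
      (G i has_derivative blinfun_apply (G' i z)) (at z within B)"
    and F'_bound: "\<And>i z. i \<in> {1..n} \<Longrightarrow> z \<in> B \<Longrightarrow> norm (F' i z) \<le> L_F"
    and G'_bound: "\<And>i z. i \<in> {1..n} \<Longrightarrow> z \<in> B \<Longrightarrow> norm (G' i z) \<le> L_G"
    and tangential_cone: "\<And>i z w. i \<in> {1..n} \<Longrightarrow> z \<in> B \<Longrightarrow> w \<in> B \<Longrightarrow>
      norm (F i z - F i w - blinfun_apply (F' i w) (z - w)) \<le> \<eta>_F * norm (F i z - F i w)"
    and \<eta>_F_nonneg: "0 \<le> \<eta>_F"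
    and G_xdag: "stack_norm n (\<lambda>i. G i xdag - ydag i) \<le> C_max"
    and \<eta>_pos: "0 < \<eta>" and lam_nonneg: "0 \<le> lam"
    and step_small: "L_F\<^sup>2 * \<eta> < 1 - \<eta>_F"
begin

definition step :: "'x \<Rightarrow> nat \<Rightarrow> 'x" where
  "step z i = z - \<eta> *\<^sub>R (adjoint (blinfun_apply (F' i z)) (F i z - ydel i)
                      + lam *\<^sub>R adjoint (blinfun_apply (G' i z)) (G i z - ydel i))"

definition c :: real where "c = penalty_factor (\<eta> * lam) L_G"

definition d :: real where "d = (1 + \<eta>_F)\<^sup>2 / (2 * (1 - L_F\<^sup>2 * \<eta> - \<eta>_F)) * \<eta>"

definition misfit :: "nat \<Rightarrow> real" where
  "misfit i = norm (G i xdag - ydag i) + norm (ydel i - ydag i)"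

lemma c_nonneg: "0 \<le> c"
  using \<eta>_pos lam_nonneg by (simp add: c_def penalty_factor_nonneg)

lemma d_nonneg: "0 \<le> d"
  using \<eta>_pos step_small by (simp add: d_def)

lemma G_lipschitz:
  assumes "i \<in> {1..n}" "z \<in> B" "w \<in> B"
  shows "norm (G i z - G i w) \<le> L_G * norm (z - w)"
  using assms G_deriv G'_bound
  by (intro differentiable_bound[OF convex_B]) (auto simp: norm_blinfun.rep_eq[symmetric])

lemma stack_norm_misfit_le: "stack_norm n misfit \<le> C_max + \<delta>"
  using stack_norm_add_norm_le[of n "\<lambda>i. G i xdag - ydag i" "\<lambda>i. ydel i - ydag i"] G_xdag noise
  unfolding misfit_def by linarith

lemma noise_tradeoff:
  "2 * (1 + \<eta>_F) * \<eta> * N * t - 2 * (1 - L_F\<^sup>2 * \<eta> - \<eta>_F) * \<eta> * t\<^sup>2 \<le> d * N\<^sup>2"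
proof -
  define D where "D = 1 - L_F\<^sup>2 * \<eta> - \<eta>_F"
  have "0 < D" using step_small by (simp add: D_def)
  then have "(2 * (1 + \<eta>_F) * \<eta> * N)\<^sup>2 / (4 * (2 * D * \<eta>)) = d * N\<^sup>2"
    unfolding d_def D_def[symmetric] using \<eta>_pos by (simp add: power2_eq_square field_simps)
  moreover have "0 < 2 * D * \<eta>" using \<open>0 < D\<close> \<eta>_pos by simp
  ultimately show ?thesis
    using linear_minus_quadratic_le[of "2 * D * \<eta>" "2 * (1 + \<eta>_F) * \<eta> * N" t]
    by (simp add: D_def mult.assoc)
qed

lemma norm_step_sq_le:
  assumes z: "z \<in> B" and i: "i \<in> {1..n}"
  shows "(norm (step z i - xdag))\<^sup>2
    \<le> (1 + c) * (norm (z - xdag))\<^sup>2 + c * (misfit i)\<^sup>2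
      - 2 * (1 - L_F\<^sup>2 * \<eta> - \<eta>_F) * \<eta> * (norm (F i z - ydel i))\<^sup>2
      + 2 * (1 + \<eta>_F) * \<eta> * norm (ydel i - ydag i) * norm (F i z - ydel i)"
proof -
  have cone: "norm ((F i z - ydel i) + (ydel i - ydag i) - F' i z (z - xdag))
      \<le> \<eta>_F * norm ((F i z - ydel i) + (ydel i - ydag i))"
    using tangential_cone[OF i xdag_in_B z] xdag_sol[OF i]
    by (simp add: norm_minus_commute blinfun.diff_right algebra_simps)
  have G_le: "norm (G i z - ydel i) \<le> L_G * norm (z - xdag) + misfit i"
    using G_lipschitz[OF i z xdag_in_B]
      norm_triangle_ineq4[of "G i z - G i xdag + (G i xdag - ydag i)" "ydel i - ydag i"]
      norm_triangle_ineq[of "G i z - G i xdag" "G i xdag - ydag i"]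
    by (simp add: misfit_def)
  have "step z i - xdag = (z - xdag) - \<eta> *\<^sub>R (adjoint (blinfun_apply (F' i z)) (F i z - ydel i)
      + lam *\<^sub>R adjoint (blinfun_apply (G' i z)) (G i z - ydel i))"
    by (simp add: step_def algebra_simps)
  then show ?thesis
    unfolding c_def
    by (simp only:) (rule norm_descent_step_sq_le[OF F'_bound[OF i z] G'_bound[OF i z]
          less_imp_le[OF \<eta>_pos] lam_nonneg \<eta>_F_nonneg cone G_le])
qed

lemma norm_step_sq_le_uniform:
  assumes z: "z \<in> B" and i: "i \<in> {1..n}"
  shows "(norm (step z i - xdag))\<^sup>2
    \<le> (1 + n * c) * (norm (z - xdag))\<^sup>2 + n * c * (C_max + \<delta>)\<^sup>2 + n * d * \<delta>\<^sup>2"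
proof -
  have "(stack_norm n misfit)\<^sup>2 \<le> (C_max + \<delta>)\<^sup>2"
    using stack_norm_misfit_le stack_norm_nonneg by (intro power_mono) auto
  then have "(misfit i)\<^sup>2 \<le> n * (C_max + \<delta>)\<^sup>2"
    using power2_norm_le_stack_norm[OF i, of misfit] mult_left_mono[of _ _ "real n"] by force
  then have misfit_le: "c * (misfit i)\<^sup>2 \<le> n * c * (C_max + \<delta>)\<^sup>2"
    using mult_left_mono[OF _ c_nonneg] by (fastforce simp: mult.left_commute)
  have "(stack_norm n (\<lambda>i. ydel i - ydag i))\<^sup>2 \<le> \<delta>\<^sup>2"
    using noise stack_norm_nonneg by (intro power_mono) auto
  then have "(norm (ydel i - ydag i))\<^sup>2 \<le> n * \<delta>\<^sup>2"
    using power2_norm_le_stack_norm[OF i, of "\<lambda>i. ydel i - ydag i"] mult_left_mono[of _ _ "real n"]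
    by force
  then have noise_le: "d * (norm (ydel i - ydag i))\<^sup>2 \<le> n * d * \<delta>\<^sup>2"
    using mult_left_mono[OF _ d_nonneg] by (fastforce simp: mult.left_commute)
  have "c * (norm (z - xdag))\<^sup>2 \<le> n * c * (norm (z - xdag))\<^sup>2"
    using mult_right_mono[of 1 "real n" "c * (norm (z - xdag))\<^sup>2"] n_pos c_nonneg
    by (simp add: mult.assoc)
  then show ?thesis
    using norm_step_sq_le[OF z i] noise_tradeoff[of "norm (ydel i - ydag i)" "norm (F i z - ydel i)"]
      misfit_le noise_le
    by (simp add: algebra_simps)
qed

lemma mean_norm_step_sq_le:
  assumes z: "z \<in> B"
  defines "R \<equiv> stack_norm n (\<lambda>i. F i z - ydel i)"
  shows "(\<Sum>i=1..n. (norm (step z i - xdag))\<^sup>2) / n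
    \<le> (1 + c) * (norm (z - xdag))\<^sup>2 + c * (C_max + \<delta>)\<^sup>2
      - 2 * (1 - L_F\<^sup>2 * \<eta> - \<eta>_F) * \<eta> * R\<^sup>2 + 2 * (1 + \<eta>_F) * \<eta> * \<delta> * R"
proof -
  define \<alpha> where "\<alpha> = 2 * (1 - L_F\<^sup>2 * \<eta> - \<eta>_F) * \<eta>"
  define \<beta> where "\<beta> = 2 * (1 + \<eta>_F) * \<eta>"
  have "(\<Sum>i=1..n. (norm (step z i - xdag))\<^sup>2) / n
      \<le> (\<Sum>i=1..n. (1 + c) * (norm (z - xdag))\<^sup>2 + c * (misfit i)\<^sup>2 - \<alpha> * (norm (F i z - ydel i))\<^sup>2
          + \<beta> * (norm (ydel i - ydag i) * norm (F i z - ydel i))) / n"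
    using norm_step_sq_le[OF z] by (intro divide_right_mono sum_mono) (auto simp: \<alpha>_def \<beta>_def mult.assoc)
  also have "\<dots> = (1 + c) * (norm (z - xdag))\<^sup>2 + c * ((\<Sum>i=1..n. (misfit i)\<^sup>2) / n)
      - \<alpha> * ((\<Sum>i=1..n. (norm (F i z - ydel i))\<^sup>2) / n)
      + \<beta> * ((\<Sum>i=1..n. norm (ydel i - ydag i) * norm (F i z - ydel i)) / n)"
    using n_pos by (simp add: sum.distrib sum_subtractf sum_distrib_left[symmetric] add_divide_distrib
        diff_divide_distrib)
  also have "\<dots> \<le> (1 + c) * (norm (z - xdag))\<^sup>2 + c * (C_max + \<delta>)\<^sup>2 - \<alpha> * R\<^sup>2 + \<beta> * (\<delta> * R)"
  proof -
    have "(\<Sum>i=1..n. (misfit i)\<^sup>2) / n \<le> (C_max + \<delta>)\<^sup>2"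
      using power_mono[OF stack_norm_misfit_le stack_norm_nonneg, of 2] by (simp add: power2_stack_norm)
    then have "c * ((\<Sum>i=1..n. (misfit i)\<^sup>2) / n) \<le> c * (C_max + \<delta>)\<^sup>2"
      using c_nonneg by (rule mult_left_mono)
    moreover have "(\<Sum>i=1..n. norm (ydel i - ydag i) * norm (F i z - ydel i)) / n \<le> \<delta> * R"
      unfolding R_def by (rule order_trans[OF mean_norm_mult_le mult_right_mono[OF noise stack_norm_nonneg]])
    then have "\<beta> * ((\<Sum>i=1..n. norm (ydel i - ydag i) * norm (F i z - ydel i)) / n) \<le> \<beta> * (\<delta> * R)"
      using \<eta>_pos \<eta>_F_nonneg by (intro mult_left_mono) (simp_all add: \<beta>_def)
    moreover have "(\<Sum>i=1..n. (norm (F i z - ydel i))\<^sup>2) / n = R\<^sup>2"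
      by (simp add: R_def power2_stack_norm)
    ultimately show ?thesis by simp
  qed
  finally show ?thesis by (simp add: \<alpha>_def \<beta>_def mult.assoc)
qed

lemma expectation_norm_step_sq_le:
  fixes X :: "(nat \<Rightarrow> nat) \<Rightarrow> 'x"
  assumes "1 \<le> k" and fresh: "\<And>\<xi> y. X (\<xi>(k := y)) = X \<xi>"
    and in_B: "\<And>\<xi>. \<xi> \<in> set_pmf (index_law n k) \<Longrightarrow> X \<xi> \<in> B"
  defines "E \<equiv> measure_pmf.expectation (index_law n k)"
    and "R \<equiv> \<lambda>\<xi>. stack_norm n (\<lambda>i. F i (X \<xi>) - ydel i)"
  shows "E (\<lambda>\<xi>. (norm (step (X \<xi>) (\<xi> k) - xdag))\<^sup>2)
    \<le> (1 + c) * E (\<lambda>\<xi>. (norm (X \<xi> - xdag))\<^sup>2) + c * (C_max + \<delta>)\<^sup>2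
      + 2 * (1 + \<eta>_F) * \<eta> * \<delta> * sqrt (E (\<lambda>\<xi>. (R \<xi>)\<^sup>2))
      - 2 * (1 - L_F\<^sup>2 * \<eta> - \<eta>_F) * \<eta> * E (\<lambda>\<xi>. (R \<xi>)\<^sup>2)"
proof -
  define \<alpha> where "\<alpha> = 2 * (1 - L_F\<^sup>2 * \<eta> - \<eta>_F) * \<eta>"
  define \<beta> where "\<beta> = 2 * (1 + \<eta>_F) * \<eta>"
  have integrable: "integrable (index_law n k) f" for f :: "(nat \<Rightarrow> nat) \<Rightarrow> real"
    using finite_set_pmf_index_law[OF n_pos] by (rule integrable_measure_pmf_finite)
  have "E (\<lambda>\<xi>. (norm (step (X \<xi>) (\<xi> k) - xdag))\<^sup>2)
      = E (\<lambda>\<xi>. (\<Sum>i=1..n. (norm (step (X \<xi>) i - xdag))\<^sup>2) / n)"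
    unfolding E_def
    by (rule expectation_index_law_fresh_index[where g = "\<lambda>\<xi> i. (norm (step (X \<xi>) i - xdag))\<^sup>2",
          OF \<open>1 \<le> k\<close> n_pos]) (simp add: fresh)
  also have "\<dots> \<le> E (\<lambda>\<xi>. (1 + c) * (norm (X \<xi> - xdag))\<^sup>2 + c * (C_max + \<delta>)\<^sup>2
      - \<alpha> * (R \<xi>)\<^sup>2 + \<beta> * \<delta> * R \<xi>)"
    unfolding E_def R_def \<alpha>_def \<beta>_def
    by (intro integral_mono_AE integrable AE_pmfI mean_norm_step_sq_le in_B)
  also have "\<dots> = (1 + c) * E (\<lambda>\<xi>. (norm (X \<xi> - xdag))\<^sup>2) + c * (C_max + \<delta>)\<^sup>2
      - \<alpha> * E (\<lambda>\<xi>. (R \<xi>)\<^sup>2) + \<beta> * \<delta> * E R"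
    unfolding E_def by (simp add: integrable)
  also have "\<dots> \<le> (1 + c) * E (\<lambda>\<xi>. (norm (X \<xi> - xdag))\<^sup>2) + c * (C_max + \<delta>)\<^sup>2
      - \<alpha> * E (\<lambda>\<xi>. (R \<xi>)\<^sup>2) + \<beta> * \<delta> * sqrt (E (\<lambda>\<xi>. (R \<xi>)\<^sup>2))"
  proof -
    have "0 \<le> \<delta>" using noise stack_norm_nonneg order_trans by blast
    then have "0 \<le> \<beta> * \<delta>" using \<eta>_pos \<eta>_F_nonneg by (simp add: \<beta>_def)
    moreover have "E R \<le> sqrt (E (\<lambda>\<xi>. (R \<xi>)\<^sup>2))"
      unfolding E_def by (rule prob_space.expectation_le_sqrt_expectation_power2)
        (simp_all add: prob_space_measure_pmf integrable)
    ultimately show ?thesis by (simp add: mult_left_mono)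
  qed
  finally show ?thesis by (simp add: \<alpha>_def \<beta>_def algebra_simps)
qed

end

lemma sgd_iter_cong:
  assumes "\<And>j. j < k \<Longrightarrow> \<xi> j = \<xi>' j"
  shows "sgd_iter F F' G G' y \<eta> lam x1 \<xi> k = sgd_iter F F' G G' y \<eta> lam x1 \<xi>' k"
  using assms by (induction k) (simp_all add: Let_def)

theorem proposition3p1:
  fixes F G :: "nat \<Rightarrow> 'x::{real_inner,complete_space} \<Rightarrow> 'y::{real_inner,complete_space}"
    and F' G' :: "nat \<Rightarrow> 'x \<Rightarrow> ('x \<Rightarrow>\<^sub>L 'y)"
    and D :: "nat \<Rightarrow> 'x set"
    and ydag ydel :: "nat \<Rightarrow> 'y"
    and x1 xdag :: 'x
    and n :: nat
    and \<delta> \<rho> L_F L_G \<eta>_F C_min C_max :: real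
    and \<eta> lam :: "nat \<Rightarrow> real"
    and k :: nat
  defines "B \<equiv> cball xdag \<rho>"
    and "x \<equiv> sgd_iter F F' G G' ydel \<eta> lam x1"
    and "c \<equiv> 2 * \<eta> k * lam k * max 1 (L_G\<^sup>2) * (3/2 + 2 * \<eta> k * lam k * L_G\<^sup>2)"
    and "d \<equiv> (1 + \<eta>_F)\<^sup>2 / (2 * (1 - L_F\<^sup>2 * \<eta> k - \<eta>_F)) * \<eta> k"
  assumes n_pos: "n \<ge> 1"
    and noise: "stack_norm n (\<lambda>i. ydel i - ydag i) \<le> \<delta>"
    and xdag_dom: "xdag \<in> (\<Inter>i\<in>{1..n}. D i)"
    and xdag_sol: "\<forall>i\<in>{1..n}. F i xdag = ydag i"
    and xdag_min: "\<forall>z\<in>(\<Inter>i\<in>{1..n}. D i). (\<forall>i\<in>{1..n}. F i z = ydag i) \<longrightarrow> dist x1 xdag \<le> dist x1 z"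
    and ball_dom: "B \<subseteq> (\<Inter>i\<in>{1..n}. D i)"
    and rho: "\<rho> \<ge> norm (x1 - xdag)"
    and F_deriv: "\<forall>i\<in>{1..n}. \<forall>z\<in>B. (F i has_derivative blinfun_apply (F' i z)) (at z within B)"
    and G_deriv: "\<forall>i\<in>{1..n}. \<forall>z\<in>B. (G i has_derivative blinfun_apply (G' i z)) (at z within B)"
    and F'_cont: "\<forall>i\<in>{1..n}. continuous_on B (F' i)"
    and G'_cont: "\<forall>i\<in>{1..n}. continuous_on B (G' i)"
    and F'_bound: "\<forall>i\<in>{1..n}. \<forall>z\<in>B. norm (F' i z) \<le> L_F"
    and G'_bound: "\<forall>i\<in>{1..n}. \<forall>z\<in>B. norm (G' i z) \<le> L_G"
    and etaF: "0 \<le> \<eta>_F" "\<eta>_F < 1"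
    and tcc: "\<forall>i\<in>{1..n}. \<forall>z\<in>B. \<forall>w\<in>B.
                norm (F i z - F i w - blinfun_apply (F' i w) (z - w)) \<le> \<eta>_F * norm (F i z - F i w)"
    and C_pos: "0 < C_min" "C_min \<le> C_max"
    and C_bounds: "\<forall>z\<in>B. (\<forall>i\<in>{1..n}. F i z = ydag i) \<longrightarrow>
                    C_min \<le> stack_norm n (\<lambda>i. G i z - ydag i) \<and>
                    stack_norm n (\<lambda>i. G i z - ydag i) \<le> C_max"
    and eta_pos: "\<forall>j\<ge>1. \<eta> j > 0"
    and lam_pos: "\<forall>j\<ge>1. lam j > 0"
    and step_P: "\<forall>j\<ge>1. L_F\<^sup>2 * \<eta> j < 1"
    and eta_div: "\<not> summable (\<lambda>j. \<eta> (Suc j))"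
    and eta_lam_sum: "summable (\<lambda>j. \<eta> (Suc j) * lam (Suc j))"
    and step_strong: "\<forall>j\<ge>1. L_F\<^sup>2 * \<eta> j < 1 - \<eta>_F"
    and k_pos: "k \<ge> 1"
  shows
    "(\<forall>\<xi>. (\<forall>j. \<xi> j \<in> {1..n}) \<longrightarrow> x \<xi> k \<in> B \<longrightarrow>
        (norm (x \<xi> (k + 1) - xdag))\<^sup>2
          \<le> (1 + real n * c) * (norm (x \<xi> k - xdag))\<^sup>2 + real n * c * (C_max + \<delta>)\<^sup>2 + real n * d * \<delta>\<^sup>2)
     \<and>
     ((\<forall>\<xi>\<in>set_pmf (index_law n k). x \<xi> k \<in> B) \<longrightarrow>
       (let E = measure_pmf.expectation (index_law n k);
            ek1 = E (\<lambda>\<xi>. (norm (x \<xi> (k + 1) - xdag))\<^sup>2);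
            ek = E (\<lambda>\<xi>. (norm (x \<xi> k - xdag))\<^sup>2);
            res = E (\<lambda>\<xi>. (stack_norm n (\<lambda>i. F i (x \<xi> k) - ydel i))\<^sup>2);
            mid = (1 + c) * ek + c * (C_max + \<delta>)\<^sup>2
                  + 2 * (1 + \<eta>_F) * \<eta> k * \<delta> * sqrt res
                  - 2 * (1 - L_F\<^sup>2 * \<eta> k - \<eta>_F) * \<eta> k * res
        in ek1 \<le> mid \<and> mid \<le> (1 + c) * ek + c * (C_max + \<delta>)\<^sup>2 + d * \<delta>\<^sup>2))"
proof -
  have "xdag \<in> B" using order_trans[OF norm_ge_zero rho] by (simp add: B_def)
  moreover from this have "stack_norm n (\<lambda>i. G i xdag - ydag i) \<le> C_max"
    using C_bounds xdag_sol by blast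
  ultimately interpret S: sgd_step F G F' G' ydag ydel xdag B n \<delta> L_F L_G \<eta>_F C_max "\<eta> k" "lam k"
    using n_pos noise xdag_sol G_deriv F'_bound G'_bound tcc etaF(1) eta_pos lam_pos step_strong k_pos
    by unfold_locales (auto simp: B_def less_imp_le)
  have "c = S.c" "d = S.d"
    unfolding c_def d_def S.c_def S.d_def penalty_factor_def by (simp_all add: mult.assoc)
  have x_Suc: "x \<xi> (k + 1) = S.step (x \<xi> k) (\<xi> k)" for \<xi>
    using k_pos by (simp add: x_def S.step_def Let_def)
  have fresh: "x (\<xi>(k := i)) k = x \<xi> k" for \<xi> i
    unfolding x_def by (rule sgd_iter_cong) simp
  show ?thesis
    unfolding Let_def x_Suc \<open>c = S.c\<close> \<open>d = S.d\<close>
  proof (intro conjI allI impI, goal_cases)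
    case (1 \<xi>)
    then show ?case by (intro S.norm_step_sq_le_uniform) auto
  next
    case 2
    then show ?case using S.expectation_norm_step_sq_le[where X = "\<lambda>\<xi>. x \<xi> k", OF k_pos fresh] by simp
  next
    case 3
    let ?res = "measure_pmf.expectation (index_law n k) (\<lambda>\<xi>. (stack_norm n (\<lambda>i. F i (x \<xi> k) - ydel i))\<^sup>2)"
    have "0 \<le> ?res" by simp
    then show ?case using S.noise_tradeoff[of \<delta> "sqrt ?res"] by simp
  qed
qed

end
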